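(* Assume (A1), (A2), (A3) and that $\{x^k\}_{k\in\mathbb N}$ is bounded. Then there exist $c_0>0$ and $k'\in\mathbb N$ such that for all $k\ge k'$, $$\operatorname{dist}(0,\partial_L\Phi(z^{k+1}))\le c_0\sum_{h=k-\tau-K}^{k}\|x^{h+1}-x^h\|\quad\text{and}\quad\operatorname{dist}(0,\partial_L\Psi(x^{k+1}))\le c_0\sum_{h=k-\tau-K}^{k}\|x^{h+1}-x^h\|,$$ where $x^i:=x^0$ for $i<0$.
   Context: Let $\mathcal H=\mathcal H_1\times\cdots\times\mathcal H_m$ be a product of finite-dimensional real Euclidean spaces with $\langle x,y\rangle=\sum_j\langle x_j,y_j\rangle$. For $x\in\mathcal H$, $x_{-j}$ denotes $x$ with its $j$th block removed and $(x_{-j};y)$ the point with $j$th block replaced by $y\in\mathcal H_j$. Let $f:\mathcal H\to\mathbb R$ be $C^1$, $r_j:\mathcal H_j\to(-\infty,\infty]$ proper lower semicontinuous, $r(x)=\sum_jr_j(x_j)$, $\Psi=f+r$ bounded below. $r$ is prox-bounded: there is $\lambda_r>0$ with $\operatorname{argmin}_y\{r(y)+\frac1{2\lambda}\|x-y\|^2\}\ne\emptyset$ for all $x$ and $0<\lambda\le\lambda_r$. For each $j$ there is $L_j:\mathcal H_{-j}\to(0,\infty)$ such that $y\mapsto\nabla_jf(x_{-j};y)$ is $L_j(x_{-j})$-Lipschitz for every $x$; $\nabla f$ is Lipschitz on every bounded set. $\partial_L$ is the limiting subdifferential and $\operatorname{dist}(0,S)=\inf_{s\in S}\|s\|$. Delays: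 an integer $\tau\ge1$ and $d_k\in\{0,\dots,\tau\}^m$; $x^{k-d_k}:=(x_1^{k-d_{k,1}},\dots,x_m^{k-d_{k,m}})$, with $x^i_j=x^0_j$ for $i\le0$. Deterministic Asynchronous PALM: choose $x^0$, $c\in(0,1)$, $M>0$, indices $j_k\in\{1,\dots,m\}$; let $\rho_\tau:=\sup_{j,k}|\{h:k-\tau\le h\le k,\ j_h=j\}|$. For each $k$ set $\gamma^k_j=\min\{c(L_j(x^{k-d_k}_{-j})+2M\sqrt{\rho_\tau\tau})^{-1},\lambda_r\}$, choose $x^{k+1}_{j_k}\in\operatorname{argmin}_{u\in\mathcal H_{j_k}}\{r_{j_k}(u)+\langle\nabla_{j_k}f(x^{k-d_k}),u-x^k_{j_k}\rangle+\frac1{2\gamma^k_{j_k}}\|u-x^k_{j_k}\|^2\}$, and $x^{k+1}_j=x^k_j$ for $j\ne j_k$. (A1): there is $K\in\mathbb N$ with $\{1,\dots,m\}\subseteq\{j_{k+1},\dots,j_{k+K}\}$ for all $k$. (A2): there is $L>0$ with $L_j(x^{k-d_k}_{-j})\le L$ for all $j,k$. (A3): $\|\nabla_{j_k}f(x^k)-\nabla_{j_k}f(x^{k-d_k})\|\le M\|x^k-x^{k-d_k}\|$ for all $k$. Lyapunov function $\Phi:\mathcal H^{1+\tau}\to(-\infty,\infty]$: $\Phi(x(0),\dots,x(\tau))=f(x(0))+r(x(0))+\frac{M\sqrt{\rho_\tau}}{2\sqrt\tau}\sum_{h=1}^\tau(\tau-h+1)\|x(h)-x(h-1)\|^2$,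 and $z^k:=(x^k,x^{k-1},\dots,x^{k-\tau})$ with $x^i:=x^0$ for $i<0$. *)

theory Defs
  imports "HOL-Analysis.Analysis"
begin

text \<open>The product space H = H_1 x ... x H_m is modelled as real^'n whose coordinates
are partitioned into blocks by blk :: 'n => nat (values in {1..m}).
Block j of x is represented inside real^'n as its coordinate projection.\<close>

definition blockproj :: "('n \<Rightarrow> nat) \<Rightarrow> nat \<Rightarrow> real^'n \<Rightarrow> real^'n" where
  "blockproj blk j x = (\<chi> i. if blk i = j then x $ i else 0)"

definition block_space :: "('n \<Rightarrow> nat) \<Rightarrow> nat \<Rightarrow> (real^'n) set" where
  "block_space blk j = {x. \<forall>i. blk i \<noteq> j \<longrightarrow> x $ i = 0}"

definition blockrepl :: "('n \<Rightarrow> nat) \<Rightarrow> nat \<Rightarrow> real^'n \<Rightarrow> real^'n \<Rightarrow> real^'n" where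
  "blockrepl blk j x y = (\<chi> i. if blk i = j then y $ i else x $ i)"

text \<open>Delayed iterate x^{k-d_k}: block j is taken from x^{k - d k j}
  (natural subtraction truncates at 0, matching x^i = x^0 for i <= 0).\<close>
definition delayed :: "('n \<Rightarrow> nat) \<Rightarrow> (nat \<Rightarrow> real^'n) \<Rightarrow> (nat \<Rightarrow> nat \<Rightarrow> nat) \<Rightarrow> nat \<Rightarrow> real^'n" where
  "delayed blk x d k = (\<chi> i. x (k - d k (blk i)) $ i)"

definition rho_tau :: "(nat \<Rightarrow> nat) \<Rightarrow> nat \<Rightarrow> nat" where
  "rho_tau jk \<tau> = Sup {card {h. k - \<tau> \<le> h \<and> h \<le> k \<and> jk h = j} | j k. True}"

definition frechet_subdiff :: "('a::real_inner \<Rightarrow> ereal) \<Rightarrow> 'a \<Rightarrow> 'a set" where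
  "frechet_subdiff g x = {v. \<bar>g x\<bar> \<noteq> \<infinity> \<and>
     (\<forall>\<epsilon>>0. \<exists>\<delta>>0. \<forall>y. norm (y - x) < \<delta> \<longrightarrow>
        g x + ereal (inner v (y - x)) - ereal (\<epsilon> * norm (y - x)) \<le> g y)}"

definition limiting_subdiff :: "('a::real_inner \<Rightarrow> ereal) \<Rightarrow> 'a \<Rightarrow> 'a set" where
  "limiting_subdiff g x = {v. \<bar>g x\<bar> \<noteq> \<infinity> \<and>
     (\<exists>xs vs. xs \<longlonglongrightarrow> x \<and> (\<lambda>n. g (xs n)) \<longlonglongrightarrow> g x \<and>
        (\<forall>n. vs n \<in> frechet_subdiff g (xs n)) \<and> vs \<longlonglongrightarrow> v)}"

text \<open>dist(0,S) = inf_{s in S} norm s, with inf of the empty set = +infinity.\<close>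
definition dist0 :: "'a::real_normed_vector set \<Rightarrow> ereal" where
  "dist0 S = (INF s\<in>S. ereal (norm s))"

end

theory Submission
  imports Defs
begin

text \<open>Each block update is a proximal step, so its optimality condition makes
  -grad_j f(x^{k-d_k}) - (x^{k+1}_j - x^k_j)/gamma_k a proximal subgradient of r_j at the new block,
  with modulus at most 1/(2 gamma_min), where gamma_min > 0 by (A2). By (A1) every block was last
  updated during the previous K steps, so summing these subgradients over the last updates gives a
  proximal subgradient W of r at x^{k+1}, and grad f(x^{k+1}) + W is a Frechet, hence limiting,
  subgradient of Psi. Blockwise its norm is at most the Lipschitz constant of grad f on a bounded
  set containing all iterates and delayed points times |x^{k+1} - x^{h-d}|, plus
  |x^{h+1} - x^h| / gamma_min; both are bounded by the sum of the last tau + K + 1 steps.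
  For Phi one adds the gradient of the smooth delay term, which involves only the last tau steps.\<close>

section \<open>Proximal subgradients\<close>

definition prox_subgradient :: "('a::real_inner \<Rightarrow> ereal) \<Rightarrow> 'a \<Rightarrow> real \<Rightarrow> 'a \<Rightarrow> bool" where
  "prox_subgradient g x \<mu> v \<longleftrightarrow> \<bar>g x\<bar> \<noteq> \<infinity> \<and>
     (\<forall>y. g x + ereal (inner v (y - x) - \<mu> * (norm (y - x))\<^sup>2) \<le> g y)"

lemma frechet_subdiff_add_prox_subgradient:
  fixes h :: "'a::real_inner \<Rightarrow> real"
  assumes h: "(h has_derivative (\<lambda>y. inner G y)) (at x)"
    and g: "prox_subgradient g x \<mu> v" and \<mu>: "\<mu> \<ge> 0"
  shows "G + v \<in> frechet_subdiff (\<lambda>y. ereal (h y) + g y) x"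
proof -
  obtain g0 where g0: "g x = ereal g0"
    using g by (cases "g x") (auto simp: prox_subgradient_def)
  have "\<exists>\<delta>>0. \<forall>y. norm (y - x) < \<delta> \<longrightarrow>
          ereal (h x) + g x + ereal (inner (G + v) (y - x)) - ereal (\<epsilon> * norm (y - x)) \<le> ereal (h y) + g y"
    if "\<epsilon> > 0" for \<epsilon>
  proof -
    obtain \<delta>1 where "\<delta>1 > 0" and \<delta>1:
      "\<And>y. norm (y - x) < \<delta>1 \<Longrightarrow> norm (h y - h x - inner G (y - x)) \<le> \<epsilon>/2 * norm (y - x)"
      using h \<open>\<epsilon> > 0\<close> unfolding has_derivative_at_alt by (meson half_gt_zero)
    define \<delta> where "\<delta> = min \<delta>1 (\<epsilon> / (2 * (\<mu> + 1)))"
    have "ereal (h x) + g x + ereal (inner (G + v) (y - x)) - ereal (\<epsilon> * norm (y - x)) \<le> ereal (h y) + g y"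
      if y: "norm (y - x) < \<delta>" for y
    proof -
      let ?d = "norm (y - x)"
      have "\<mu> * ?d \<le> \<epsilon> / 2"
      proof -
        have "\<mu> * ?d \<le> (\<mu> + 1) * (\<epsilon> / (2 * (\<mu> + 1)))"
          using y \<mu> by (intro mult_mono) (auto simp: \<delta>_def)
        also have "\<dots> = \<epsilon> / 2" using \<mu> by (simp add: field_simps)
        finally show ?thesis .
      qed
      have "\<mu> * ?d\<^sup>2 = (\<mu> * ?d) * ?d" by (simp add: power2_eq_square)
      also have "\<dots> \<le> \<epsilon>/2 * ?d" using \<open>\<mu> * ?d \<le> \<epsilon> / 2\<close> by (rule mult_right_mono) simp
      finally have quad: "\<mu> * ?d\<^sup>2 \<le> \<epsilon>/2 * ?d" .
      have "\<bar>h y - h x - inner G (y - x)\<bar> \<le> \<epsilon>/2 * ?d" using \<delta>1[of y] y by (simp add: \<delta>_def)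
      hence "h x + inner G (y - x) - h y \<le> \<epsilon>/2 * ?d" unfolding abs_le_iff by linarith
      hence "h x + g0 + inner (G + v) (y - x) - \<epsilon> * ?d \<le> h y + (g0 + (inner v (y - x) - \<mu> * ?d\<^sup>2))"
        using quad by (simp add: inner_add_left)
      hence "ereal (h x) + g x + ereal (inner (G + v) (y - x)) - ereal (\<epsilon> * ?d)
          \<le> ereal (h y) + (g x + ereal (inner v (y - x) - \<mu> * ?d\<^sup>2))"
        using g0 by simp
      also have "\<dots> \<le> ereal (h y) + g y"
        using g by (intro add_left_mono) (simp add: prox_subgradient_def)
      finally show ?thesis .
    qed
    moreover have "\<delta> > 0" using \<open>\<delta>1 > 0\<close> \<open>\<epsilon> > 0\<close> \<mu> by (simp add: \<delta>_def)
    ultimately show ?thesis by blast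
  qed
  thus ?thesis using g0 by (simp add: frechet_subdiff_def)
qed

lemma dist0_limiting_subdiff_le:
  assumes "v \<in> frechet_subdiff g x"
  shows "dist0 (limiting_subdiff g x) \<le> ereal (norm v)"
proof -
  have "v \<in> limiting_subdiff g x"
    using assms unfolding limiting_subdiff_def
    by (intro CollectI conjI exI[of _ "\<lambda>_. x"] exI[of _ "\<lambda>_. v"]) (auto simp: frechet_subdiff_def)
  thus ?thesis unfolding dist0_def by (rule INF_lower)
qed

lemma prox_subgradient_sum:
  assumes "finite J" and "\<And>j. j \<in> J \<Longrightarrow> prox_subgradient (g j) x (\<mu> j) (v j)"
  shows "prox_subgradient (\<lambda>y. \<Sum>j\<in>J. g j y) x (\<Sum>j\<in>J. \<mu> j) (\<Sum>j\<in>J. v j)"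
  unfolding prox_subgradient_def
proof (intro conjI allI)
  have "\<And>j. j \<in> J \<Longrightarrow> \<exists>a. g j x = ereal a"
    using assms(2) unfolding prox_subgradient_def by (metis abs_ereal.simps ereal_cases)
  then obtain a where a: "\<And>j. j \<in> J \<Longrightarrow> g j x = ereal (a j)" by metis
  thus "\<bar>\<Sum>j\<in>J. g j x\<bar> \<noteq> \<infinity>" by simp
  fix y
  have "(\<Sum>j\<in>J. g j x) + ereal (inner (\<Sum>j\<in>J. v j) (y - x) - (\<Sum>j\<in>J. \<mu> j) * (norm (y - x))\<^sup>2)
      = (\<Sum>j\<in>J. g j x + ereal (inner (v j) (y - x) - \<mu> j * (norm (y - x))\<^sup>2))"
    by (simp add: sum.distrib inner_sum_left sum_subtractf sum_distrib_right)
  also have "\<dots> \<le> (\<Sum>j\<in>J. g j y)"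
    using assms(2) by (intro sum_mono) (simp add: prox_subgradient_def)
  finally show "(\<Sum>j\<in>J. g j x) + ereal (inner (\<Sum>j\<in>J. v j) (y - x) - (\<Sum>j\<in>J. \<mu> j) * (norm (y - x))\<^sup>2)
      \<le> (\<Sum>j\<in>J. g j y)" .
qed

lemma prox_subgradient_vec_nth:
  fixes w :: "'a::real_inner^'t"
  assumes "prox_subgradient g (w $ i) \<mu> v" and "\<mu> \<ge> 0"
  shows "prox_subgradient (\<lambda>w. g (w $ i)) w \<mu> (axis i v)"
  unfolding prox_subgradient_def
proof (intro conjI allI)
  show "\<bar>g (w $ i)\<bar> \<noteq> \<infinity>" using assms(1) by (simp add: prox_subgradient_def)
  fix w'
  have "\<mu> * (norm (w' $ i - w $ i))\<^sup>2 \<le> \<mu> * (norm (w' - w))\<^sup>2"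
    using assms(2) Finite_Cartesian_Product.norm_nth_le[of "w' - w" i] by (intro mult_left_mono power_mono) auto
  hence "g (w $ i) + ereal (inner (axis i v) (w' - w) - \<mu> * (norm (w' - w))\<^sup>2)
      \<le> g (w $ i) + ereal (inner v (w' $ i - w $ i) - \<mu> * (norm (w' $ i - w $ i))\<^sup>2)"
    by (intro add_left_mono) (simp add: inner_axis')
  also have "\<dots> \<le> g (w' $ i)" using assms(1) by (simp add: prox_subgradient_def)
  finally show "g (w $ i) + ereal (inner (axis i v) (w' - w) - \<mu> * (norm (w' - w))\<^sup>2) \<le> g (w' $ i)" .
qed

lemma prox_step_minorant:
  fixes \<phi> :: "'a::real_inner \<Rightarrow> ereal"
  assumes opt: "\<phi> p + ereal (inner g (p - a) + \<beta> * (norm (p - a))\<^sup>2)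
               \<le> \<phi> u + ereal (inner g (u - a) + \<beta> * (norm (u - a))\<^sup>2)"
    and fin: "\<phi> p = ereal \<phi>p" and "\<beta> \<le> \<mu>"
  shows "\<phi> p + ereal (inner (- g - (2 * \<beta>) *\<^sub>R (p - a)) (u - p) - \<mu> * (norm (u - p))\<^sup>2) \<le> \<phi> u"
proof (cases "\<phi> u")
  case (real \<phi>u)
  have expand: "(norm (s + t))\<^sup>2 = (norm s)\<^sup>2 + 2 * inner t s + (norm t)\<^sup>2" for s t :: 'a
    unfolding power2_norm_eq_inner by (simp add: inner_add inner_commute)
  have sq: "(norm (u - a))\<^sup>2 = (norm (u - p))\<^sup>2 + 2 * inner (p - a) (u - p) + (norm (p - a))\<^sup>2"
    using expand[of "u - p" "p - a"] by simp
  have lin: "inner g (u - a) = inner g (u - p) + inner g (p - a)"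
    by (simp add: inner_diff_right)
  have "\<beta> * (norm (u - p))\<^sup>2 \<le> \<mu> * (norm (u - p))\<^sup>2"
    using \<open>\<beta> \<le> \<mu>\<close> by (intro mult_right_mono) auto
  moreover have "\<phi>p + (inner g (p - a) + \<beta> * (norm (p - a))\<^sup>2) \<le> \<phi>u + (inner g (u - a) + \<beta> * (norm (u - a))\<^sup>2)"
    using opt fin real by simp
  ultimately have "\<phi>p + (- inner g (u - p) - 2 * \<beta> * inner (p - a) (u - p) - \<mu> * (norm (u - p))\<^sup>2) \<le> \<phi>u"
    unfolding sq lin by (simp add: algebra_simps)
  thus ?thesis using fin real by (simp add: inner_diff_left)
next
  case MInf
  thus ?thesis using opt fin by simp
qed simp

section \<open>Block coordinates\<close>

lemma blockproj_in_block_space: "blockproj blk j y \<in> block_space blk j"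
  by (simp add: blockproj_def block_space_def)

lemma blockproj_block_space: "u \<in> block_space blk j \<Longrightarrow> blockproj blk j u = u"
  by (auto simp: blockproj_def block_space_def vec_eq_iff)

lemma blockproj_add: "blockproj blk j (a + b) = blockproj blk j a + blockproj blk j b"
  by (simp add: blockproj_def vec_eq_iff)

lemma blockproj_diff: "blockproj blk j (a - b) = blockproj blk j a - blockproj blk j b"
  by (simp add: blockproj_def vec_eq_iff)

lemma blockproj_blockproj:
  "blockproj blk j (blockproj blk i y) = (if i = j then blockproj blk j y else 0)"
  by (auto simp: blockproj_def vec_eq_iff)

lemma blockproj_sum: "blockproj blk j (\<Sum>i\<in>I. v i) = (\<Sum>i\<in>I. blockproj blk j (v i))"
  by (induction I rule: infinite_finite_induct) (simp_all add: blockproj_add, simp_all add: blockproj_def vec_eq_iff)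

lemma inner_blockproj: "inner (blockproj blk j a) b = inner a (blockproj blk j b)"
  unfolding inner_vec_def blockproj_def by (intro sum.cong) auto

lemma norm_blockproj_le: "norm (blockproj blk j y) \<le> norm y"
proof -
  have "(norm (blockproj blk j y))\<^sup>2 = inner (blockproj blk j y) y"
    by (simp add: power2_norm_eq_inner inner_blockproj blockproj_blockproj)
  also have "\<dots> \<le> norm (blockproj blk j y) * norm y" by (rule norm_cauchy_schwarz)
  finally show ?thesis
    by (metis mult_le_cancel_left_pos norm_ge_zero order_le_less power2_eq_square)
qed

lemma norm_le_sum_blockproj:
  assumes "finite J" and "\<And>i. blk i \<in> J"
  shows "norm y \<le> (\<Sum>j\<in>J. norm (blockproj blk j y))"
proof -
  have "y = (\<Sum>j\<in>J. blockproj blk j y)"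
    using assms by (simp add: vec_eq_iff blockproj_def sum.delta[of J _ "\<lambda>_. _"] if_distrib cong: if_cong)
  hence "norm y = norm (\<Sum>j\<in>J. blockproj blk j y)" by simp
  also have "\<dots> \<le> (\<Sum>j\<in>J. norm (blockproj blk j y))" by (rule norm_sum)
  finally show ?thesis .
qed

lemma prox_subgradient_blockproj:
  assumes v: "v \<in> block_space blk j" and fin: "\<bar>g (blockproj blk j x)\<bar> \<noteq> \<infinity>" and "\<mu> \<ge> 0"
    and minor: "\<And>u. u \<in> block_space blk j \<Longrightarrow>
      g (blockproj blk j x) + ereal (inner v (u - blockproj blk j x) - \<mu> * (norm (u - blockproj blk j x))\<^sup>2) \<le> g u"
  shows "prox_subgradient (\<lambda>y. g (blockproj blk j y)) x \<mu> v"
  unfolding prox_subgradient_def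
proof (intro conjI allI fin)
  fix y
  have "inner v (blockproj blk j y - blockproj blk j x) = inner v (y - x)"
    using blockproj_block_space[OF v] inner_blockproj[of blk j v] by (metis blockproj_diff)
  moreover have "\<mu> * (norm (blockproj blk j y - blockproj blk j x))\<^sup>2 \<le> \<mu> * (norm (y - x))\<^sup>2"
    using \<open>\<mu> \<ge> 0\<close> norm_blockproj_le[of blk j "y - x"]
    by (intro mult_left_mono power_mono) (auto simp: blockproj_diff)
  ultimately have "g (blockproj blk j x) + ereal (inner v (y - x) - \<mu> * (norm (y - x))\<^sup>2)
      \<le> g (blockproj blk j x) + ereal (inner v (blockproj blk j y - blockproj blk j x)
           - \<mu> * (norm (blockproj blk j y - blockproj blk j x))\<^sup>2)"
    by (intro add_left_mono) simp
  also have "\<dots> \<le> g (blockproj blk j y)" by (rule minor[OF blockproj_in_block_space])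
  finally show "g (blockproj blk j x) + ereal (inner v (y - x) - \<mu> * (norm (y - x))\<^sup>2) \<le> g (blockproj blk j y)" .
qed

section \<open>The delay term of the Lyapunov function\<close>

definition chain_energy :: "(nat \<Rightarrow> real) \<Rightarrow> (nat \<Rightarrow> 't) \<Rightarrow> nat set \<Rightarrow> 'a::real_inner^'t \<Rightarrow> real" where
  "chain_energy a e A w = (\<Sum>h\<in>A. a h * (norm (w $ e h - w $ e (h - 1)))\<^sup>2)"

definition chain_energy_grad :: "(nat \<Rightarrow> real) \<Rightarrow> (nat \<Rightarrow> 't) \<Rightarrow> nat set \<Rightarrow> 'a::real_inner^'t \<Rightarrow> 'a^'t" where
  "chain_energy_grad a e A w =
     (\<Sum>h\<in>A. (2 * a h) *\<^sub>R (axis (e h) (w $ e h - w $ e (h - 1)) - axis (e (h - 1)) (w $ e h - w $ e (h - 1))))"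

lemma has_derivative_chain_energy:
  fixes e :: "nat \<Rightarrow> 't::finite" and w :: "'a::real_inner^'t"
  shows "(chain_energy a e A has_derivative (\<lambda>v. inner (chain_energy_grad a e A w) v)) (at w)"
proof -
  have "((\<lambda>w. a h * (norm (w $ e h - w $ e (h - 1)))\<^sup>2) has_derivative
     (\<lambda>v. inner ((2 * a h) *\<^sub>R (axis (e h) (w $ e h - w $ e (h - 1)) - axis (e (h - 1)) (w $ e h - w $ e (h - 1)))) v)) (at w)"
    for h
  proof -
    let ?\<Delta> = "\<lambda>w::'a^'t. w $ e h - w $ e (h - 1)"
    have "(?\<Delta> has_derivative ?\<Delta>) (at w)"
      by (intro has_derivative_diff bounded_linear_imp_has_derivative bounded_linear_vec_nth)
    hence D: "((\<lambda>w. a h * inner (?\<Delta> w) (?\<Delta> w)) has_derivative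
        (\<lambda>v. a h * (inner (?\<Delta> w) (?\<Delta> v) + inner (?\<Delta> v) (?\<Delta> w)))) (at w)"
      by (intro has_derivative_mult_right has_derivative_inner)
    have "(\<lambda>v. a h * (inner (?\<Delta> w) (?\<Delta> v) + inner (?\<Delta> v) (?\<Delta> w)))
        = (\<lambda>v. inner ((2 * a h) *\<^sub>R (axis (e h) (?\<Delta> w) - axis (e (h - 1)) (?\<Delta> w))) v)"
      by (simp add: fun_eq_iff inner_axis inner_axis' algebra_simps inner_commute)
    with D show ?thesis by (simp add: power2_norm_eq_inner)
  qed
  hence "(chain_energy a e A has_derivative
      (\<lambda>v. \<Sum>h\<in>A. inner ((2 * a h) *\<^sub>R (axis (e h) (w $ e h - w $ e (h - 1)) - axis (e (h - 1)) (w $ e h - w $ e (h - 1)))) v)) (at w)"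
    unfolding chain_energy_def by (intro has_derivative_sum)
  thus ?thesis by (simp add: chain_energy_grad_def inner_sum_left)
qed

lemma norm_axis: "norm (axis i u) = norm (u::'a::real_inner)"
  by (simp add: norm_eq_sqrt_inner inner_axis_axis)

lemma norm_chain_energy_grad_le:
  fixes e :: "nat \<Rightarrow> 't::finite" and w :: "'a::real_inner^'t"
  shows "norm (chain_energy_grad a e A w) \<le> (\<Sum>h\<in>A. 4 * \<bar>a h\<bar> * norm (w $ e h - w $ e (h - 1)))"
proof -
  have "norm ((2 * a h) *\<^sub>R (axis (e h) u - axis (e (h - 1)) u)) \<le> 4 * \<bar>a h\<bar> * norm u" for h and u :: 'a
  proof -
    have "norm (axis (e h) u - axis (e (h - 1)) u) \<le> norm (axis (e h) u) + norm (axis (e (h - 1)) u)"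
      by (rule norm_triangle_ineq4)
    also have "\<dots> = 2 * norm u" by (simp add: norm_axis)
    finally have "norm (axis (e h) u - axis (e (h - 1)) u) \<le> 2 * norm u" .
    hence "\<bar>2 * a h\<bar> * norm (axis (e h) u - axis (e (h - 1)) u) \<le> \<bar>2 * a h\<bar> * (2 * norm u)"
      by (rule mult_left_mono) simp
    thus ?thesis by (simp add: abs_mult)
  qed
  thus ?thesis unfolding chain_energy_grad_def by (intro order_trans[OF norm_sum sum_mono])
qed

lemma frechet_subdiff_add_chain_energy:
  fixes w :: "'a::real_inner^'t::finite" and e :: "nat \<Rightarrow> 't"
  assumes f: "(f has_derivative (\<lambda>y. inner G y)) (at (w $ i))"
    and g: "prox_subgradient g (w $ i) \<mu> v" and "\<mu> \<ge> 0"
  shows "axis i (G + v) + C *\<^sub>R chain_energy_grad a e A w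
           \<in> frechet_subdiff (\<lambda>w. ereal (f (w $ i)) + g (w $ i) + ereal (C * chain_energy a e A w)) w"
proof -
  have "((\<lambda>w. f (w $ i)) has_derivative (\<lambda>u. inner G (u $ i))) (at w)"
    using has_derivative_compose[OF bounded_linear_imp_has_derivative[OF bounded_linear_vec_nth] f]
    by (simp add: o_def)
  hence "((\<lambda>w. f (w $ i) + C * chain_energy a e A w) has_derivative
      (\<lambda>u. inner (axis i G + C *\<^sub>R chain_energy_grad a e A w) u)) (at w)"
    by (auto intro!: has_derivative_eq_rhs[OF has_derivative_add[OF _ has_derivative_mult_right[OF has_derivative_chain_energy]]]
        simp: fun_eq_iff inner_add_left inner_axis')
  hence "(axis i G + C *\<^sub>R chain_energy_grad a e A w) + axis i v
      \<in> frechet_subdiff (\<lambda>w. ereal (f (w $ i) + C * chain_energy a e A w) + g (w $ i)) w"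
    by (rule frechet_subdiff_add_prox_subgradient[OF _ prox_subgradient_vec_nth[OF g \<open>\<mu> \<ge> 0\<close>] \<open>\<mu> \<ge> 0\<close>])
  moreover have "(axis i G + C *\<^sub>R chain_energy_grad a e A w) + axis i v = axis i (G + v) + C *\<^sub>R chain_energy_grad a e A w"
    by (simp add: axis_def vec_eq_iff)
  moreover have "(\<lambda>w. ereal (f (w $ i) + C * chain_energy a e A w) + g (w $ i))
      = (\<lambda>w. ereal (f (w $ i)) + g (w $ i) + ereal (C * chain_energy a e A w))"
    by (simp add: fun_eq_iff ac_simps flip: plus_ereal.simps(1))
  ultimately show ?thesis by simp
qed

section \<open>Asynchronous PALM\<close>

locale async_palm =
  fixes m :: nat and blk :: "'n::finite \<Rightarrow> nat"
    and f :: "real^'n \<Rightarrow> real" and gradf :: "real^'n \<Rightarrow> real^'n"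
    and rj :: "nat \<Rightarrow> real^'n \<Rightarrow> ereal" and r :: "real^'n \<Rightarrow> ereal"
    and lam_r :: real and Lj :: "nat \<Rightarrow> real^'n \<Rightarrow> real"
    and \<tau> :: nat and d :: "nat \<Rightarrow> nat \<Rightarrow> nat"
    and x :: "nat \<Rightarrow> real^'n" and c M :: real and jk :: "nat \<Rightarrow> nat"
    and K :: nat and L :: real
  assumes blk_range: "blk i \<in> {1..m}"
    and f_grad: "(f has_derivative (\<lambda>h. inner (gradf y) h)) (at y)"
    and rj_not_MInf: "j \<in> {1..m} \<Longrightarrow> y \<in> block_space blk j \<Longrightarrow> rj j y \<noteq> -\<infinity>"
    and rj_proper: "j \<in> {1..m} \<Longrightarrow> \<exists>y\<in>block_space blk j. rj j y \<noteq> \<infinity>"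
    and r_def: "r y = (\<Sum>j\<in>{1..m}. rj j (blockproj blk j y))"
    and lam_r_pos: "lam_r > 0"
    and Lj_pos: "j \<in> {1..m} \<Longrightarrow> Lj j y > 0"
    and gradf_lipschitz_on_bounded:
      "bounded S \<Longrightarrow> \<exists>\<Lambda>. \<forall>y\<in>S. \<forall>y'\<in>S. norm (gradf y - gradf y') \<le> \<Lambda> * norm (y - y')"
    and delay_le: "d k j \<le> \<tau>"
    and c_pos: "c > 0" and M_pos: "M > 0"
    and jk_range: "jk k \<in> {1..m}"
    and step_min: "u \<in> block_space blk (jk k) \<Longrightarrow>
        (let j = jk k; xd = delayed blk x d k; xkj = blockproj blk j (x k);
             \<gamma> = min (c / (Lj j xd + 2 * M * sqrt (real (rho_tau jk \<tau>) * real \<tau>))) lam_r;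
             obj = (\<lambda>v. rj j v + ereal (inner (blockproj blk j (gradf xd)) (v - xkj)
                                        + 1 / (2 * \<gamma>) * (norm (v - xkj))\<^sup>2))
         in obj (blockproj blk j (x (Suc k))) \<le> obj u)"
    and step_other: "j \<noteq> jk k \<Longrightarrow> blockproj blk j (x (Suc k)) = blockproj blk j (x k)"
    and all_blocks_updated: "{1..m} \<subseteq> jk ` {k + 1..k + K}"
    and L_pos: "L > 0" and Lj_delayed_le: "j \<in> {1..m} \<Longrightarrow> Lj j (delayed blk x d k) \<le> L"
    and bounded_iterates: "bounded (range x)"
begin

definition step_size :: "nat \<Rightarrow> real" where
  "step_size k = min (c / (Lj (jk k) (delayed blk x d k) + 2 * M * sqrt (real (rho_tau jk \<tau>) * real \<tau>))) lam_r"

definition min_step :: real where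
  "min_step = min (c / (L + 2 * M * sqrt (real (rho_tau jk \<tau>) * real \<tau>))) lam_r"

lemma min_step_pos: "min_step > 0"
  using c_pos L_pos M_pos lam_r_pos by (simp add: min_step_def add_pos_nonneg)

lemma min_step_le_step_size: "min_step \<le> step_size k"
proof -
  let ?s = "2 * M * sqrt (real (rho_tau jk \<tau>) * real \<tau>)"
  have "0 \<le> ?s" using M_pos by simp
  hence "0 < Lj (jk k) (delayed blk x d k) + ?s" using Lj_pos[OF jk_range] by (simp add: add_pos_nonneg)
  moreover have "Lj (jk k) (delayed blk x d k) + ?s \<le> L + ?s" using Lj_delayed_le[OF jk_range] by simp
  ultimately have "c / (L + ?s) \<le> c / (Lj (jk k) (delayed blk x d k) + ?s)"
    using c_pos by (intro divide_left_mono) auto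
  thus ?thesis by (auto simp: min_step_def step_size_def)
qed

definition block_subgrad :: "nat \<Rightarrow> real^'n" where
  "block_subgrad k = blockproj blk (jk k) (- gradf (delayed blk x d k) - (1 / step_size k) *\<^sub>R (x (Suc k) - x k))"

lemma prox_subgradient_block_subgrad:
  assumes "blockproj blk (jk k) y = blockproj blk (jk k) (x (Suc k))"
  shows "prox_subgradient (\<lambda>y. rj (jk k) (blockproj blk (jk k) y)) y (1 / (2 * min_step)) (block_subgrad k)"
proof -
  let ?j = "jk k"
  let ?p = "blockproj blk ?j (x (Suc k))" and ?a = "blockproj blk ?j (x k)"
    and ?g = "blockproj blk ?j (gradf (delayed blk x d k))" and ?\<beta> = "1 / (2 * step_size k)"
  have opt: "rj ?j ?p + ereal (inner ?g (?p - ?a) + ?\<beta> * (norm (?p - ?a))\<^sup>2)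
      \<le> rj ?j u + ereal (inner ?g (u - ?a) + ?\<beta> * (norm (u - ?a))\<^sup>2)"
    if "u \<in> block_space blk ?j" for u
    using step_min[OF that] by (simp add: Let_def step_size_def)
  obtain u0 where "u0 \<in> block_space blk ?j" "rj ?j u0 \<noteq> \<infinity>" using rj_proper[OF jk_range] by blast
  with opt have "rj ?j ?p \<noteq> \<infinity>" by force
  moreover have "rj ?j ?p \<noteq> -\<infinity>" by (rule rj_not_MInf[OF jk_range blockproj_in_block_space])
  ultimately obtain \<phi>p where \<phi>p: "rj ?j ?p = ereal \<phi>p" by (cases "rj ?j ?p") auto
  have \<beta>: "?\<beta> \<le> 1 / (2 * min_step)"
    using min_step_pos min_step_le_step_size[of k] by (simp add: frac_le)
  have v: "block_subgrad k = - ?g - (2 * ?\<beta>) *\<^sub>R (?p - ?a)"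
    by (simp add: block_subgrad_def blockproj_def vec_eq_iff)
  show ?thesis
  proof (rule prox_subgradient_blockproj)
    show "block_subgrad k \<in> block_space blk ?j" by (simp add: block_subgrad_def blockproj_in_block_space)
    show "\<bar>rj ?j (blockproj blk ?j y)\<bar> \<noteq> \<infinity>" using \<phi>p assms by simp
    show "0 \<le> 1 / (2 * min_step)" using min_step_pos by simp
    show "rj ?j (blockproj blk ?j y) + ereal (inner (block_subgrad k) (u - blockproj blk ?j y)
        - 1 / (2 * min_step) * (norm (u - blockproj blk ?j y))\<^sup>2) \<le> rj ?j u"
      if "u \<in> block_space blk ?j" for u
      unfolding v assms using prox_step_minorant[OF opt[OF that] \<phi>p \<beta>] .
  qed
qed

lemma blockproj_iterate_unchanged:
  assumes "h \<le> k" and "\<And>i. h < i \<Longrightarrow> i \<le> k \<Longrightarrow> jk i \<noteq> j"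
  shows "blockproj blk j (x (Suc k)) = blockproj blk j (x (Suc h))"
  using assms
proof (induction k)
  case (Suc k)
  show ?case
  proof (cases "h = Suc k")
    case False
    hence "blockproj blk j (x (Suc k)) = blockproj blk j (x (Suc h))" using Suc by simp
    thus ?thesis using step_other[of j "Suc k"] Suc.prems(2)[of "Suc k"] False Suc.prems(1) by simp
  qed simp
qed simp

definition last_update :: "nat \<Rightarrow> nat \<Rightarrow> nat" where
  "last_update k j = (GREATEST h. h \<le> k \<and> jk h = j)"

lemma last_update:
  assumes "K \<le> k" and "j \<in> {1..m}"
  shows "k + 1 - K \<le> last_update k j" and "last_update k j \<le> k" and "jk (last_update k j) = j"
    and "blockproj blk j (x (Suc k)) = blockproj blk j (x (Suc (last_update k j)))"
proof -
  have "{1..m} \<subseteq> jk ` {k - K + 1..k}" using all_blocks_updated[of "k - K"] assms(1) by simp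
  then obtain h0 where h0: "h0 \<in> {k - K + 1..k}" "jk h0 = j" using assms(2) by blast
  have last: "last_update k j \<le> k \<and> jk (last_update k j) = j"
    using GreatestI_nat[of "\<lambda>h. h \<le> k \<and> jk h = j" h0 k] h0 by (auto simp: last_update_def)
  thus "last_update k j \<le> k" "jk (last_update k j) = j" by auto
  show "k + 1 - K \<le> last_update k j"
    using Greatest_le_nat[of "\<lambda>h. h \<le> k \<and> jk h = j" h0 k] h0 assms(1) by (auto simp: last_update_def)
  have "jk i \<noteq> j" if "last_update k j < i" "i \<le> k" for i
    using Greatest_le_nat[of "\<lambda>h. h \<le> k \<and> jk h = j" i k] that by (auto simp: last_update_def)
  thus "blockproj blk j (x (Suc k)) = blockproj blk j (x (Suc (last_update k j)))"
    using last by (intro blockproj_iterate_unchanged) auto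
qed

definition r_subgrad :: "nat \<Rightarrow> real^'n" where
  "r_subgrad k = (\<Sum>j\<in>{1..m}. block_subgrad (last_update k j))"

lemma prox_subgradient_r:
  assumes "K \<le> k"
  shows "prox_subgradient r (x (Suc k)) (real m / (2 * min_step)) (r_subgrad k)"
proof -
  have "prox_subgradient (\<lambda>y. \<Sum>j\<in>{1..m}. rj j (blockproj blk j y)) (x (Suc k))
      (\<Sum>j\<in>{1..m}. 1 / (2 * min_step)) (r_subgrad k)"
    unfolding r_subgrad_def
  proof (rule prox_subgradient_sum)
    fix j assume j: "j \<in> {1..m}"
    show "prox_subgradient (\<lambda>y. rj j (blockproj blk j y)) (x (Suc k)) (1 / (2 * min_step))
        (block_subgrad (last_update k j))"
      using prox_subgradient_block_subgrad[of "last_update k j" "x (Suc k)"] last_update[OF assms j] by simp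
  qed simp
  moreover have "r = (\<lambda>y. \<Sum>j\<in>{1..m}. rj j (blockproj blk j y))" by (simp add: fun_eq_iff r_def)
  ultimately show ?thesis by simp
qed

lemma blockproj_block_subgrad:
  "blockproj blk j (block_subgrad h) = (if jk h = j then block_subgrad h else 0)"
  by (simp add: block_subgrad_def blockproj_blockproj)

lemma blockproj_r_subgrad:
  assumes "K \<le> k" and "j \<in> {1..m}"
  shows "blockproj blk j (r_subgrad k) = block_subgrad (last_update k j)"
proof -
  have "blockproj blk j (r_subgrad k) = (\<Sum>i\<in>{1..m}. if i = j then block_subgrad (last_update k j) else 0)"
    unfolding r_subgrad_def blockproj_sum
    by (intro sum.cong refl) (simp add: blockproj_block_subgrad last_update(3)[OF assms(1)])
  thus ?thesis using assms(2) by simp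
qed

definition window :: "nat \<Rightarrow> real" where
  "window k = (\<Sum>h=k-\<tau>-K..k. norm (x (Suc h) - x h))"

lemma step_le_window: "k - \<tau> - K \<le> h \<Longrightarrow> h \<le> k \<Longrightarrow> norm (x (Suc h) - x h) \<le> window k"
  unfolding window_def by (rule member_le_sum) auto

lemma dist_le_window:
  assumes "k - \<tau> - K \<le> i" and "i \<le> Suc k"
  shows "norm (x (Suc k) - x i) \<le> window k"
proof -
  have "norm (x (Suc k) - x i) = norm (\<Sum>h=i..<Suc k. x (Suc h) - x h)"
    using sum_Suc_diff'[OF assms(2), of x] by simp
  also have "\<dots> \<le> (\<Sum>h=i..<Suc k. norm (x (Suc h) - x h))" by (rule norm_sum)
  also have "\<dots> \<le> window k"
    unfolding window_def using assms(1) by (intro sum_mono2) auto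
  finally show ?thesis .
qed

lemma dist_delayed_le_window:
  assumes "K + \<tau> \<le> k" and "k + 1 - K \<le> h" and "h \<le> k"
  shows "norm (x (Suc k) - delayed blk x d h) \<le> CARD('n) * window k"
proof -
  have "norm (x (Suc k) - delayed blk x d h) \<le> (\<Sum>i\<in>UNIV. \<bar>(x (Suc k) - delayed blk x d h) $ i\<bar>)"
    by (rule norm_le_l1_cart)
  also have "\<dots> \<le> (\<Sum>i\<in>(UNIV::'n set). window k)"
  proof (rule sum_mono)
    fix i
    have "\<bar>(x (Suc k) - delayed blk x d h) $ i\<bar> = \<bar>(x (Suc k) - x (h - d h (blk i))) $ i\<bar>"
      by (simp add: delayed_def)
    also have "\<dots> \<le> norm (x (Suc k) - x (h - d h (blk i)))" by (rule component_le_norm_cart)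
    also have "\<dots> \<le> window k"
      using assms delay_le[of h "blk i"] by (intro dist_le_window) linarith+
    finally show "\<bar>(x (Suc k) - delayed blk x d h) $ i\<bar> \<le> window k" .
  qed
  finally show ?thesis by simp
qed

lemma gradf_lipschitz_iterates:
  obtains \<Lambda> where "\<Lambda> \<ge> 0"
    and "\<And>k h. norm (gradf (x k) - gradf (delayed blk x d h)) \<le> \<Lambda> * norm (x k - delayed blk x d h)"
proof -
  obtain R where R: "\<And>k. norm (x k) \<le> R" using bounded_iterates by (auto simp: bounded_iff)
  have "norm (delayed blk x d h) \<le> CARD('n) * R" for h
  proof -
    have "norm (delayed blk x d h) \<le> (\<Sum>i\<in>UNIV. \<bar>delayed blk x d h $ i\<bar>)" by (rule norm_le_l1_cart)
    also have "\<dots> \<le> (\<Sum>i\<in>(UNIV::'n set). R)"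
      using component_le_norm_cart R order_trans by (intro sum_mono) (fastforce simp: delayed_def)
    finally show ?thesis by simp
  qed
  hence "bounded (range (delayed blk x d))" by (auto simp: bounded_iff)
  hence "bounded (range x \<union> range (delayed blk x d))" using bounded_iterates by simp
  then obtain \<Lambda> where "\<forall>y\<in>range x \<union> range (delayed blk x d). \<forall>y'\<in>range x \<union> range (delayed blk x d).
      norm (gradf y - gradf y') \<le> \<Lambda> * norm (y - y')"
    using gradf_lipschitz_on_bounded by blast
  hence "norm (gradf (x k) - gradf (delayed blk x d h)) \<le> \<bar>\<Lambda>\<bar> * norm (x k - delayed blk x d h)" for k h
    by (meson UnCI abs_ge_self mult_right_mono norm_ge_zero order_trans rangeI)
  thus ?thesis using that[of "\<bar>\<Lambda>\<bar>"] by simp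
qed

lemma blockproj_psi_subgrad:
  assumes "K \<le> k" and "j \<in> {1..m}"
  defines "h \<equiv> last_update k j"
  shows "blockproj blk j (gradf (x (Suc k)) + r_subgrad k)
    = blockproj blk j (gradf (x (Suc k)) - gradf (delayed blk x d h) - (1 / step_size h) *\<^sub>R (x (Suc h) - x h))"
proof -
  have "blockproj blk j (r_subgrad k)
      = blockproj blk j (- gradf (delayed blk x d h) - (1 / step_size h) *\<^sub>R (x (Suc h) - x h))"
    using blockproj_r_subgrad[OF assms(1,2)] last_update(3)[OF assms(1,2)] by (simp add: h_def block_subgrad_def)
  hence "blockproj blk j (gradf (x (Suc k)) + r_subgrad k)
      = blockproj blk j (gradf (x (Suc k)) + (- gradf (delayed blk x d h) - (1 / step_size h) *\<^sub>R (x (Suc h) - x h)))"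
    by (simp only: blockproj_add)
  thus ?thesis by (simp add: algebra_simps)
qed

lemma norm_blockproj_psi_subgrad_le:
  assumes "\<Lambda> \<ge> 0"
    and \<Lambda>: "\<And>k h. norm (gradf (x k) - gradf (delayed blk x d h)) \<le> \<Lambda> * norm (x k - delayed blk x d h)"
    and k: "K + \<tau> \<le> k" and j: "j \<in> {1..m}"
  shows "norm (blockproj blk j (gradf (x (Suc k)) + r_subgrad k)) \<le> (\<Lambda> * CARD('n) + 1 / min_step) * window k"
proof -
  define h where "h = last_update k j"
  have "K \<le> k" using k by simp
  have h: "k + 1 - K \<le> h" "h \<le> k"
    using last_update[OF \<open>K \<le> k\<close> j] by (simp_all add: h_def)
  let ?xd = "delayed blk x d h"
  have "norm (blockproj blk j (gradf (x (Suc k)) + r_subgrad k))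
      \<le> norm (gradf (x (Suc k)) - gradf ?xd - (1 / step_size h) *\<^sub>R (x (Suc h) - x h))"
    unfolding blockproj_psi_subgrad[OF \<open>K \<le> k\<close> j] h_def by (rule norm_blockproj_le)
  also have "\<dots> \<le> norm (gradf (x (Suc k)) - gradf ?xd) + (1 / step_size h) * norm (x (Suc h) - x h)"
    using norm_triangle_ineq4[of "gradf (x (Suc k)) - gradf ?xd" "(1 / step_size h) *\<^sub>R (x (Suc h) - x h)"]
      less_le_trans[OF min_step_pos min_step_le_step_size[of h]] by simp
  also have "\<dots> \<le> \<Lambda> * (CARD('n) * window k) + (1 / min_step) * window k"
  proof (rule add_mono)
    show "norm (gradf (x (Suc k)) - gradf ?xd) \<le> \<Lambda> * (CARD('n) * window k)"
      using \<Lambda> \<open>\<Lambda> \<ge> 0\<close> dist_delayed_le_window[OF k h] by (meson mult_left_mono order_trans)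
    have "norm (x (Suc h) - x h) \<le> window k" using h k by (intro step_le_window) auto
    moreover have "1 / step_size h \<le> 1 / min_step"
      using min_step_pos min_step_le_step_size[of h] by (simp add: frac_le)
    ultimately show "(1 / step_size h) * norm (x (Suc h) - x h) \<le> (1 / min_step) * window k"
      using min_step_pos by (intro mult_mono) auto
  qed
  finally show ?thesis by (simp add: algebra_simps)
qed

lemma norm_psi_subgrad_le:
  obtains C where "C \<ge> 0" and "\<And>k. K + \<tau> \<le> k \<Longrightarrow> norm (gradf (x (Suc k)) + r_subgrad k) \<le> C * window k"
proof -
  obtain \<Lambda> where "\<Lambda> \<ge> 0"
    and \<Lambda>: "\<And>k h. norm (gradf (x k) - gradf (delayed blk x d h)) \<le> \<Lambda> * norm (x k - delayed blk x d h)"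
    using gradf_lipschitz_iterates by blast
  define C where "C = real m * (\<Lambda> * CARD('n) + 1 / min_step)"
  have "norm (gradf (x (Suc k)) + r_subgrad k) \<le> C * window k" if k: "K + \<tau> \<le> k" for k
  proof -
    have "norm (gradf (x (Suc k)) + r_subgrad k) \<le> (\<Sum>j\<in>{1..m}. norm (blockproj blk j (gradf (x (Suc k)) + r_subgrad k)))"
      by (rule norm_le_sum_blockproj[OF _ blk_range]) simp
    also have "\<dots> \<le> (\<Sum>j\<in>{1..m}. (\<Lambda> * CARD('n) + 1 / min_step) * window k)"
      by (intro sum_mono norm_blockproj_psi_subgrad_le[OF \<open>\<Lambda> \<ge> 0\<close> \<Lambda> k])
    finally show ?thesis by (simp add: C_def)
  qed
  moreover have "C \<ge> 0" using \<open>\<Lambda> \<ge> 0\<close> min_step_pos by (simp add: C_def)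
  ultimately show ?thesis using that by blast
qed

lemma norm_chain_energy_grad_le_window:
  fixes e :: "nat \<Rightarrow> 't::finite" and w :: "real^'n^'t"
  assumes k: "K + \<tau> \<le> k" and w: "\<And>h. h \<le> \<tau> \<Longrightarrow> w $ e h = x (Suc k - h)"
  shows "norm (chain_energy_grad (\<lambda>h. real (\<tau> - h + 1)) e {1..\<tau>} w) \<le> 4 * real \<tau> ^ 2 * window k"
proof -
  have "norm (chain_energy_grad (\<lambda>h. real (\<tau> - h + 1)) e {1..\<tau>} w)
      \<le> (\<Sum>h\<in>{1..\<tau>}. 4 * \<bar>real (\<tau> - h + 1)\<bar> * norm (w $ e h - w $ e (h - 1)))"
    by (rule norm_chain_energy_grad_le)
  also have "\<dots> \<le> (\<Sum>h\<in>{1..\<tau>}. 4 * real \<tau> * window k)"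
  proof (rule sum_mono)
    fix h assume h: "h \<in> {1..\<tau>}"
    have "h - 1 \<le> \<tau>" "Suc k - (h - 1) = Suc (Suc (k - h))" using h k by auto
    hence "w $ e h - w $ e (h - 1) = - (x (Suc (Suc (k - h))) - x (Suc (k - h)))"
      using w[of h] w[of "h - 1"] h k by (simp add: Suc_diff_le)
    hence "norm (w $ e h - w $ e (h - 1)) \<le> window k"
      using h k by (simp only: norm_minus_cancel) (intro step_le_window; auto)
    moreover have "\<bar>real (\<tau> - h + 1)\<bar> \<le> real \<tau>" using h by auto
    ultimately show "4 * \<bar>real (\<tau> - h + 1)\<bar> * norm (w $ e h - w $ e (h - 1)) \<le> 4 * real \<tau> * window k"
      by (intro mult_mono) auto
  qed
  finally show ?thesis by (simp add: power2_eq_square)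
qed

lemma psi_frechet_subgrad:
  assumes "K \<le> k"
  shows "gradf (x (Suc k)) + r_subgrad k \<in> frechet_subdiff (\<lambda>y. ereal (f y) + r y) (x (Suc k))"
  using min_step_pos
  by (intro frechet_subdiff_add_prox_subgradient[OF f_grad prox_subgradient_r[OF assms]]) simp

lemma lyapunov_frechet_subgrad:
  fixes e :: "nat \<Rightarrow> 't::finite" and w :: "real^'n^'t"
  assumes "K \<le> k" and "w $ e 0 = x (Suc k)"
  shows "axis (e 0) (gradf (x (Suc k)) + r_subgrad k) + C *\<^sub>R chain_energy_grad a e A w
           \<in> frechet_subdiff (\<lambda>w. ereal (f (w $ e 0)) + r (w $ e 0) + ereal (C * chain_energy a e A w)) w"
proof (rule frechet_subdiff_add_chain_energy)
  show "(f has_derivative (\<lambda>h. inner (gradf (x (Suc k))) h)) (at (w $ e 0))"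
    using f_grad assms(2) by simp
  show "prox_subgradient r (w $ e 0) (real m / (2 * min_step)) (r_subgrad k)"
    using prox_subgradient_r[OF assms(1)] assms(2) by simp
  show "real m / (2 * min_step) \<ge> 0" using min_step_pos by simp
qed

lemma subdiff_dist_le_window:
  fixes e :: "nat \<Rightarrow> 't::finite" and z :: "nat \<Rightarrow> real^'n^'t" and C :: real
  assumes z: "\<And>k h. h \<le> \<tau> \<Longrightarrow> z k $ e h = x (k - h)"
  obtains c0 where "c0 > 0"
    and "\<And>k. K + \<tau> \<le> k \<Longrightarrow> dist0 (limiting_subdiff (\<lambda>w. ereal (f (w $ e 0)) + r (w $ e 0)
           + ereal (C * chain_energy (\<lambda>h. real (\<tau> - h + 1)) e {1..\<tau>} w)) (z (Suc k))) \<le> ereal (c0 * window k)"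
    and "\<And>k. K + \<tau> \<le> k \<Longrightarrow> dist0 (limiting_subdiff (\<lambda>y. ereal (f y) + r y) (x (Suc k))) \<le> ereal (c0 * window k)"
proof -
  obtain C1 where "C1 \<ge> 0" and C1: "\<And>k. K + \<tau> \<le> k \<Longrightarrow> norm (gradf (x (Suc k)) + r_subgrad k) \<le> C1 * window k"
    using norm_psi_subgrad_le by blast
  define c0 where "c0 = C1 + \<bar>C\<bar> * (4 * real \<tau> ^ 2) + 1"
  have Phi: "dist0 (limiting_subdiff (\<lambda>w. ereal (f (w $ e 0)) + r (w $ e 0)
      + ereal (C * chain_energy (\<lambda>h. real (\<tau> - h + 1)) e {1..\<tau>} w)) (z (Suc k))) \<le> ereal (c0 * window k)"
    and Psi: "dist0 (limiting_subdiff (\<lambda>y. ereal (f y) + r y) (x (Suc k))) \<le> ereal (c0 * window k)"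
    if k: "K + \<tau> \<le> k" for k
  proof -
    let ?v = "gradf (x (Suc k)) + r_subgrad k"
    let ?G = "chain_energy_grad (\<lambda>h. real (\<tau> - h + 1)) e {1..\<tau>} (z (Suc k))"
    have W: "window k \<ge> 0" by (simp add: window_def sum_nonneg)
    have "norm ?G \<le> 4 * real \<tau> ^ 2 * window k"
      using k z by (intro norm_chain_energy_grad_le_window) auto
    hence "norm (axis (e 0) ?v) + norm (C *\<^sub>R ?G) \<le> C1 * window k + \<bar>C\<bar> * (4 * real \<tau> ^ 2 * window k)"
      using C1[OF k] by (simp add: norm_axis mult_left_mono add_mono)
    moreover have "C1 * window k + \<bar>C\<bar> * (4 * real \<tau> ^ 2 * window k) \<le> c0 * window k"
      using W by (simp add: c0_def algebra_simps)
    ultimately have "norm (axis (e 0) ?v + C *\<^sub>R ?G) \<le> c0 * window k"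
      using norm_triangle_ineq[of "axis (e 0) ?v" "C *\<^sub>R ?G"] by linarith
    moreover have "z (Suc k) $ e 0 = x (Suc k)" using z[of 0] by simp
    ultimately show "dist0 (limiting_subdiff (\<lambda>w. ereal (f (w $ e 0)) + r (w $ e 0)
        + ereal (C * chain_energy (\<lambda>h. real (\<tau> - h + 1)) e {1..\<tau>} w)) (z (Suc k))) \<le> ereal (c0 * window k)"
      using k by (intro order_trans[OF dist0_limiting_subdiff_le[OF lyapunov_frechet_subgrad]]) simp_all
    have "C1 * window k \<le> c0 * window k"
      using W by (intro mult_right_mono) (simp_all add: c0_def)
    hence "norm ?v \<le> c0 * window k" using C1[OF k] by linarith
    thus "dist0 (limiting_subdiff (\<lambda>y. ereal (f y) + r y) (x (Suc k))) \<le> ereal (c0 * window k)"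
      using k by (intro order_trans[OF dist0_limiting_subdiff_le[OF psi_frechet_subgrad]]) simp_all
  qed
  moreover have "c0 > 0" using \<open>C1 \<ge> 0\<close> by (simp add: c0_def add_nonneg_pos)
  ultimately show ?thesis using that by blast
qed

end

theorem mainTheorem7:
  fixes m :: nat and blk :: "'n::finite \<Rightarrow> nat"
    and f :: "real^'n \<Rightarrow> real" and gradf :: "real^'n \<Rightarrow> real^'n"
    and rj :: "nat \<Rightarrow> real^'n \<Rightarrow> ereal"
    and r Psi :: "real^'n \<Rightarrow> ereal"
    and lam_r :: real and Lj :: "nat \<Rightarrow> real^'n \<Rightarrow> real"
    and \<tau> :: nat and d :: "nat \<Rightarrow> nat \<Rightarrow> nat"
    and x :: "nat \<Rightarrow> real^'n" and c M :: real and jk :: "nat \<Rightarrow> nat"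
    and K :: nat and L :: real
    and e :: "nat \<Rightarrow> 't::finite"
    and Phi :: "real^'n^'t \<Rightarrow> ereal" and z :: "nat \<Rightarrow> real^'n^'t"
  assumes blk_range: "\<forall>i. blk i \<in> {1..m}"
    and f_grad: "\<forall>y. (f has_derivative (\<lambda>h. inner (gradf y) h)) (at y)"
    and gradf_cont: "continuous_on UNIV gradf"
    and rj_proper: "\<forall>j\<in>{1..m}. (\<forall>y\<in>block_space blk j. rj j y \<noteq> -\<infinity>)
                      \<and> (\<exists>y\<in>block_space blk j. rj j y \<noteq> \<infinity>)"
    and rj_lsc: "\<forall>j\<in>{1..m}. \<forall>y\<in>block_space blk j. \<forall>ys.
                    (\<forall>n. ys n \<in> block_space blk j) \<longrightarrow> ys \<longlonglongrightarrow> y \<longrightarrow>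
                    rj j y \<le> liminf (\<lambda>n. rj j (ys n))"
    and r_def: "r = (\<lambda>y. \<Sum>j\<in>{1..m}. rj j (blockproj blk j y))"
    and Psi_def: "Psi = (\<lambda>y. ereal (f y) + r y)"
    and Psi_bdd: "\<exists>b::real. \<forall>y. ereal b \<le> Psi y"
    and lr_pos: "lam_r > 0"
    and prox_bdd: "\<forall>y. \<forall>lam. 0 < lam \<and> lam \<le> lam_r \<longrightarrow>
        (\<exists>w. \<forall>w'. r w + ereal (1 / (2 * lam) * (norm (y - w))\<^sup>2)
                    \<le> r w' + ereal (1 / (2 * lam) * (norm (y - w'))\<^sup>2))"
    (* block Lipschitz gradients, L_j depending only on x_{-j} *)
    and Lj_pos: "\<forall>j\<in>{1..m}. \<forall>y. Lj j y > 0"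
    and Lj_dep: "\<forall>j\<in>{1..m}. \<forall>y y'. (\<forall>i. blk i \<noteq> j \<longrightarrow> y $ i = y' $ i) \<longrightarrow> Lj j y = Lj j y'"
    and Lj_lip: "\<forall>j\<in>{1..m}. \<forall>y u u'. u \<in> block_space blk j \<longrightarrow> u' \<in> block_space blk j \<longrightarrow>
        norm (blockproj blk j (gradf (blockrepl blk j y u)) - blockproj blk j (gradf (blockrepl blk j y u')))
          \<le> Lj j y * norm (u - u')"
    and gradf_loclip: "\<forall>S. bounded S \<longrightarrow> (\<exists>\<Lambda>. \<forall>y\<in>S. \<forall>y'\<in>S. norm (gradf y - gradf y') \<le> \<Lambda> * norm (y - y'))"
    and tau_ge: "\<tau> \<ge> 1"
    and d_le: "\<forall>k j. d k j \<le> \<tau>"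
    and c_range: "0 < c" "c < 1"
    and M_pos: "M > 0"
    and jk_range: "\<forall>k. jk k \<in> {1..m}"
    and step_min: "\<forall>k. \<forall>u\<in>block_space blk (jk k).
        (let j = jk k; xd = delayed blk x d k; xkj = blockproj blk j (x k);
             \<gamma> = min (c / (Lj j xd + 2 * M * sqrt (real (rho_tau jk \<tau>) * real \<tau>))) lam_r;
             obj = (\<lambda>v. rj j v + ereal (inner (blockproj blk j (gradf xd)) (v - xkj)
                                        + 1 / (2 * \<gamma>) * (norm (v - xkj))\<^sup>2))
         in obj (blockproj blk j (x (Suc k))) \<le> obj u)"
    and step_other: "\<forall>k. \<forall>j. j \<noteq> jk k \<longrightarrow> blockproj blk j (x (Suc k)) = blockproj blk j (x k)"
    and A1: "\<forall>k. {1..m} \<subseteq> jk ` {k + 1..k + K}"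
    and A2: "L > 0" "\<forall>j\<in>{1..m}. \<forall>k. Lj j (delayed blk x d k) \<le> L"
    and A3: "\<forall>k. norm (blockproj blk (jk k) (gradf (x k)) - blockproj blk (jk k) (gradf (delayed blk x d k)))
                 \<le> M * norm (x k - delayed blk x d k)"
    and x_bdd: "bounded (range x)"
    (* Lyapunov function on H^{1+tau}, components indexed 0..tau via the bijection e *)
    and e_bij: "bij_betw e {0..\<tau>} UNIV"
    and Phi_def: "Phi = (\<lambda>w. Psi (w $ e 0) + ereal (M * sqrt (real (rho_tau jk \<tau>)) / (2 * sqrt (real \<tau>))
                    * (\<Sum>h=1..\<tau>. real (\<tau> - h + 1) * (norm (w $ e h - w $ e (h - 1)))\<^sup>2)))"
    and z_def: "\<forall>k. \<forall>h\<in>{0..\<tau>}. z k $ e h = x (k - h)"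
  shows "\<exists>c0>0. \<exists>k'. \<forall>k\<ge>k'.
           dist0 (limiting_subdiff Phi (z (Suc k))) \<le> ereal (c0 * (\<Sum>h=k-\<tau>-K..k. norm (x (Suc h) - x h)))
         \<and> dist0 (limiting_subdiff Psi (x (Suc k))) \<le> ereal (c0 * (\<Sum>h=k-\<tau>-K..k. norm (x (Suc h) - x h)))"
proof -
  interpret async_palm m blk f gradf rj r lam_r Lj \<tau> d x c M jk K L
    using blk_range f_grad rj_proper lr_pos Lj_pos gradf_loclip d_le c_range M_pos jk_range step_min
      step_other A1 A2 x_bdd
    by unfold_locales (simp_all add: r_def)
  let ?C = "M * sqrt (real (rho_tau jk \<tau>)) / (2 * sqrt (real \<tau>))"
  obtain c0 where "c0 > 0"
    and Phi: "\<And>k. K + \<tau> \<le> k \<Longrightarrow> dist0 (limiting_subdiff (\<lambda>w. ereal (f (w $ e 0)) + r (w $ e 0)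
           + ereal (?C * chain_energy (\<lambda>h. real (\<tau> - h + 1)) e {1..\<tau>} w)) (z (Suc k))) \<le> ereal (c0 * window k)"
    and Psi: "\<And>k. K + \<tau> \<le> k \<Longrightarrow> dist0 (limiting_subdiff (\<lambda>y. ereal (f y) + r y) (x (Suc k))) \<le> ereal (c0 * window k)"
    using subdiff_dist_le_window[where e = e and z = z and C = ?C] z_def by auto
  have "Phi = (\<lambda>w. ereal (f (w $ e 0)) + r (w $ e 0) + ereal (?C * chain_energy (\<lambda>h. real (\<tau> - h + 1)) e {1..\<tau>} w))"
    by (simp add: Phi_def Psi_def chain_energy_def fun_eq_iff)
  thus ?thesis
    using \<open>c0 > 0\<close> Phi Psi by (auto simp: Psi_def window_def)
qed

end
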